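(* Let $f\in\mathrm{Homeo}_*(\mathbb{T}^2)$, let $F:\mathbb{R}^2\to\mathbb{R}^2$ be a lift of $f$, and let $D\subset\mathbb{R}^2$ be a closed topological disk. Then there exist no integer $N\ne0$ and $(p,q)\in\mathbb{Z}^2$ such that $F^N(D)\subseteq T_{p,q}(D)$ or $T_{p,q}(D)\subseteq F^N(D)$, where $T_{p,q}(x,y)=(x+p,y+q)$.
   Context: $\mathbb{T}^2=\mathbb{R}^2/\mathbb{Z}^2$. $\mathrm{Homeo}_*(\mathbb{T}^2)$ is the set of homeomorphisms of $\mathbb{T}^2$ isotopic to the identity whose rotation set (the set of limit points mod $\mathbb{Z}^2$ of $(F^{n_k}(\tilde z)-\tilde z)/n_k$, $n_k\to\infty$, $\tilde z\in\mathbb{R}^2$, for a lift $F$) is a single point $(\alpha,\beta)\bmod\mathbb{Z}^2$ with $1,\alpha,\beta$ rationally independent. *)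

theory Defs
  imports "HOL-Analysis.Analysis"
begin

definition transl :: "int \<Rightarrow> int \<Rightarrow> real^2 \<Rightarrow> real^2" where
  "transl p q z = z + vector [real_of_int p, real_of_int q]"

text \<open>F is a lift of a homeomorphism of the torus isotopic to the identity:
  a homeomorphism of the plane commuting with all integer translations.\<close>
definition torus_homeo_lift :: "(real^2 \<Rightarrow> real^2) \<Rightarrow> bool" where
  "torus_homeo_lift F \<longleftrightarrow> (\<exists>G. homeomorphism UNIV UNIV F G) \<and>
     (\<forall>p q z. F (transl p q z) = transl p q (F z))"

definition iter_int :: "(real^2 \<Rightarrow> real^2) \<Rightarrow> int \<Rightarrow> real^2 \<Rightarrow> real^2" where
  "iter_int F N = (if N \<ge> 0 then F ^^ nat N else (inv F) ^^ nat (- N))"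

definition rotation_set :: "(real^2 \<Rightarrow> real^2) \<Rightarrow> (real^2) set" where
  "rotation_set F = {v. \<exists>z n. strict_mono (n :: nat \<Rightarrow> nat) \<and>
      ((\<lambda>k. (1 / real (n k)) *\<^sub>R ((F ^^ n k) z - z)) \<longlonglongrightarrow> v)}"

definition rationally_independent3 :: "real \<Rightarrow> real \<Rightarrow> real \<Rightarrow> bool" where
  "rationally_independent3 a b c \<longleftrightarrow>
     (\<forall>x y z :: rat. of_rat x * a + of_rat y * b + of_rat z * c = 0 \<longrightarrow> x = 0 \<and> y = 0 \<and> z = 0)"

text \<open>F is a lift of some f in Homeo_*(T^2) (totally irrational pseudo-rotation).\<close>
definition homeo_star_lift :: "(real^2 \<Rightarrow> real^2) \<Rightarrow> bool" where
  "homeo_star_lift F \<longleftrightarrow> torus_homeo_lift F \<and>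
     (\<exists>\<alpha> \<beta>. rotation_set F = {vector [\<alpha>, \<beta>]} \<and> rationally_independent3 1 \<alpha> \<beta>)"

end

theory Submission
  imports Defs
begin

(* Suppose F^N(D) \<subseteq> T_{p,q}(D) (or the reverse inclusion) for
   some N \<noteq> 0.  Then T_{p,q}^{-1} \<circ> F^N (resp. F^{-N} \<circ> T_{p,q}) is a continuous
   self-map of the closed disk D, so by Brouwer's fixed point theorem there is a
   point z with F^N(z) = T_{p,q}(z).  Since F commutes with integer translations,
   after possibly replacing N by -N we get (F^m)(z) = T_{a,b}(z) for some m > 0, and
   then (F^{km})(z) = T_{ka,kb}(z) for all k.  Along the times km the displacement
   quotient is constantly (a/m, b/m), which is therefore in the rotation set; as
   the rotation set is the single point (\<alpha>, \<beta>), this makes \<alpha> rational,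
   contradicting the rational independence of 1, \<alpha>, \<beta>. *)

lemma disk_fixed_point:
  fixes D :: "'a::euclidean_space set" and f :: "'a \<Rightarrow> 'a"
  assumes "D homeomorphic cball (0 :: 'b::euclidean_space) 1"
    and "continuous_on D f" and "f ` D \<subseteq> D"
  obtains x where "x \<in> D" and "f x = x"
proof -
  have "\<forall>g. continuous_on (cball (0::'b) 1) g \<and> g \<in> cball 0 1 \<rightarrow> cball 0 1
          \<longrightarrow> (\<exists>y\<in>cball 0 1. g y = y)"
    using brouwer_ball[of 1 0] by (metis zero_less_one)
  then have "\<forall>g. continuous_on D g \<and> g \<in> D \<rightarrow> D \<longrightarrow> (\<exists>x\<in>D. g x = x)"
    using homeomorphic_fixpoint_property[OF assms(1)] by blast
  then show ?thesis using assms(2,3) that by blast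
qed

lemma vector2_add: "vector [a, b] + vector [c, d] = (vector [a + c, b + d] :: real^2)"
  by (simp add: vec_eq_iff forall_2 vector_2)

lemma vector2_scale: "r *\<^sub>R (vector [a, b] :: real^2) = vector [r * a, r * b]"
  by (simp add: vec_eq_iff forall_2 vector_2)

lemma transl_transl [simp]: "transl a b (transl c d z) = transl (a + c) (b + d) z"
  unfolding transl_def by (simp add: vector2_add algebra_simps)

lemma transl_0 [simp]: "transl 0 0 z = z"
  by (simp add: transl_def vec_eq_iff forall_2 vector_2)

lemma transl_eq_iff: "transl p q z = w \<longleftrightarrow> z = transl (- p) (- q) w"
  by auto

lemma continuous_on_transl: "continuous_on S (transl p q)"
  unfolding transl_def by (intro continuous_intros)

lemma funpow_transl:
  assumes "\<And>p q z. H (transl p q z) = transl p q (H z)"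
  shows "(H ^^ m) (transl p q z) = transl p q ((H ^^ m) z)"
  by (induction m) (auto simp: assms)

lemma torus_homeo_lift_inv:
  assumes "torus_homeo_lift F"
  shows "homeomorphism UNIV UNIV F (inv F)"
    and "inv F (transl p q z) = transl p q (inv F z)"
proof -
  from assms obtain G where hom: "homeomorphism UNIV UNIV F G"
    and comm: "\<And>p q z. F (transl p q z) = transl p q (F z)"
    unfolding torus_homeo_lift_def by blast
  have GF: "G (F x) = x" and FG: "F (G x) = x" for x
    using hom unfolding homeomorphism_def by auto
  have "inv F = G"
    using GF FG by (metis inv_equality ext)
  then show "homeomorphism UNIV UNIV F (inv F)"
    using hom by simp
  show "inv F (transl p q z) = transl p q (inv F z)"
    using \<open>inv F = G\<close> GF FG comm by metis
qed

lemma homeomorphism_funpow: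
  assumes "homeomorphism S S f g"
  shows "homeomorphism S S (f ^^ n) (g ^^ n)"
proof (induction n)
  case 0
  then show ?case using homeomorphism_ident by (simp add: id_def)
next
  case (Suc n)
  have "homeomorphism S S (f \<circ> f ^^ n) (g ^^ n \<circ> g)"
    using homeomorphism_compose[OF Suc assms] .
  then show ?case by (simp add: funpow_Suc_right funpow_swap1 comp_def)
qed

lemma iter_int_homeomorphism:
  assumes "torus_homeo_lift F"
  shows "homeomorphism UNIV UNIV (iter_int F N) (iter_int F (- N))"
proof -
  have hom: "homeomorphism UNIV UNIV (F ^^ n) (inv F ^^ n)" for n
    using homeomorphism_funpow[OF torus_homeo_lift_inv(1)[OF assms]] .
  show ?thesis
  proof (cases "N \<ge> 0")
    case True
    then show ?thesis
      using hom[of "nat N"] by (cases "N = 0") (auto simp: iter_int_def)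
  next
    case False
    then show ?thesis
      using homeomorphism_symD[OF hom[of "nat (- N)"]] by (simp add: iter_int_def)
  qed
qed

lemma iter_int_transl:
  assumes "torus_homeo_lift F"
  shows "iter_int F N (transl p q z) = transl p q (iter_int F N z)"
  using funpow_transl[of F] funpow_transl[of "inv F"]
    assms torus_homeo_lift_inv(2)[OF assms]
  unfolding iter_int_def torus_homeo_lift_def by simp

lemma disk_inclusion_translated_point:
  assumes hom: "homeomorphism UNIV UNIV H H'"
    and disk: "D homeomorphic cball (0 :: real^2) 1"
    and incl: "H ` D \<subseteq> transl p q ` D \<or> transl p q ` D \<subseteq> H ` D"
  shows "\<exists>z. H z = transl p q z"
proof -
  have contH: "continuous_on S H" and contH': "continuous_on S H'"
    and H'H: "H' (H x) = x" and HH': "H (H' x) = x" for S x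
    using hom unfolding homeomorphism_def by (auto intro: continuous_on_subset)
  from incl show ?thesis
  proof
    assume sub: "H ` D \<subseteq> transl p q ` D"
    have "(transl (- p) (- q) \<circ> H) ` D \<subseteq> D"
      using sub by (force simp: image_subset_iff)
    moreover have "continuous_on D (transl (- p) (- q) \<circ> H)"
      by (intro continuous_on_compose contH continuous_on_transl)
    ultimately obtain z where "transl (- p) (- q) (H z) = z"
      using disk_fixed_point[OF disk] by (metis comp_apply)
    then show ?thesis by (auto simp: transl_eq_iff)
  next
    assume sub: "transl p q ` D \<subseteq> H ` D"
    have "(H' \<circ> transl p q) ` D \<subseteq> D"
      using sub H'H by (force simp: image_subset_iff)
    moreover have "continuous_on D (H' \<circ> transl p q)"
      by (intro continuous_on_compose contH' continuous_on_transl)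
    ultimately obtain z where "H' (transl p q z) = z"
      using disk_fixed_point[OF disk] by (metis comp_apply)
    then have "H z = transl p q z" using HH' by metis
    then show ?thesis ..
  qed
qed

lemma translated_point_positive_iterate:
  assumes lift: "torus_homeo_lift F" and "N \<noteq> 0"
    and z: "iter_int F N z = transl a b z"
  shows "\<exists>m > 0. \<exists>a' b'. (F ^^ m) z = transl a' b' z"
proof (cases "N > 0")
  case True
  then show ?thesis
    using z by (intro exI[of _ "nat N"]) (auto simp: iter_int_def)
next
  case False
  have inverse: "iter_int F (- N) (iter_int F N x) = x" for x
    using iter_int_homeomorphism[OF lift, of N] unfolding homeomorphism_def by simp
  have "z = transl a b (iter_int F (- N) z)"
    using inverse[of z] iter_int_transl[OF lift] z by metis
  then have "iter_int F (- N) z = transl (- a) (- b) z"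
    by (metis transl_eq_iff)
  then show ?thesis
    using False \<open>N \<noteq> 0\<close> by (intro exI[of _ "nat (- N)"]) (auto simp: iter_int_def)
qed

lemma funpow_translated_point:
  assumes comm: "\<And>p q z. F (transl p q z) = transl p q (F z)"
    and z: "(F ^^ m) z = transl a b z"
  shows "(F ^^ (k * m)) z = transl (int k * a) (int k * b) z"
proof (induction k)
  case (Suc k)
  have "(F ^^ (Suc k * m)) z = (F ^^ m) ((F ^^ (k * m)) z)"
    by (simp add: funpow_add)
  also have "\<dots> = transl (int k * a) (int k * b) (transl a b z)"
    using Suc funpow_transl[of F, OF comm] z by simp
  finally show ?case by (simp add: algebra_simps)
qed simp

lemma translated_point_rotation_vector:
  assumes comm: "\<And>p q z. F (transl p q z) = transl p q (F z)"
    and "m > 0" and z: "(F ^^ m) z = transl a b z"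
  shows "vector [real_of_int a / real m, real_of_int b / real m] \<in> rotation_set F"
proof -
  define n where "n k = (k + 1) * m" for k
  have "strict_mono n"
    unfolding n_def strict_mono_def using \<open>m > 0\<close> by simp
  moreover have "(1 / real (n k)) *\<^sub>R ((F ^^ n k) z - z)
                   = vector [real_of_int a / real m, real_of_int b / real m]" for k
  proof -
    define v :: "real^2" where "v = vector [real_of_int a, real_of_int b]"
    have "(F ^^ n k) z - z = real (k + 1) *\<^sub>R v"
      using funpow_translated_point[OF comm z, of "k + 1"]
      by (simp add: n_def v_def transl_def vector2_scale)
    moreover have "1 / real (n k) * real (k + 1) = 1 / real m"
      using \<open>m > 0\<close> unfolding n_def of_nat_mult by simp
    ultimately have "(1 / real (n k)) *\<^sub>R ((F ^^ n k) z - z) = (1 / real m) *\<^sub>R v"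
      by (metis scaleR_scaleR)
    then show ?thesis
      by (simp add: v_def vector2_scale)
  qed
  ultimately show ?thesis
    unfolding rotation_set_def by (auto intro!: exI[of _ z] exI[of _ n])
qed

lemma rationally_independent3_irrational:
  assumes "rationally_independent3 1 \<alpha> \<beta>"
  shows "\<alpha> \<notin> \<rat>"
proof
  assume "\<alpha> \<in> \<rat>"
  then obtain r where "\<alpha> = of_rat r" by (auto elim: Rats_cases)
  then have "of_rat (- r) * 1 + of_rat 1 * \<alpha> + of_rat 0 * \<beta> = 0"
    by (simp add: of_rat_minus)
  then show False
    using assms unfolding rationally_independent3_def by fastforce
qed

theorem lemma6:
  fixes F :: "real^2 \<Rightarrow> real^2" and D :: "(real^2) set"
  assumes "homeo_star_lift F"
    and "D homeomorphic cball (0 :: real^2) 1"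
  shows "\<not> (\<exists>N :: int. \<exists>p q :: int. N \<noteq> 0 \<and>
            (iter_int F N ` D \<subseteq> transl p q ` D \<or> transl p q ` D \<subseteq> iter_int F N ` D))"
proof
  assume "\<exists>N :: int. \<exists>p q :: int. N \<noteq> 0 \<and>
            (iter_int F N ` D \<subseteq> transl p q ` D \<or> transl p q ` D \<subseteq> iter_int F N ` D)"
  then obtain N p q where "N \<noteq> 0"
    and incl: "iter_int F N ` D \<subseteq> transl p q ` D \<or> transl p q ` D \<subseteq> iter_int F N ` D"
    by blast
  from assms(1) obtain \<alpha> \<beta> where lift: "torus_homeo_lift F"
    and rot: "rotation_set F = {vector [\<alpha>, \<beta>]}" and indep: "rationally_independent3 1 \<alpha> \<beta>"
    unfolding homeo_star_lift_def by blast
  obtain z where "iter_int F N z = transl p q z"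
    using disk_inclusion_translated_point[OF iter_int_homeomorphism[OF lift] assms(2) incl]
    by blast
  then obtain m a b where "m > 0" and "(F ^^ m) z = transl a b z"
    using translated_point_positive_iterate[OF lift \<open>N \<noteq> 0\<close>] by blast
  then have "vector [real_of_int a / real m, real_of_int b / real m] \<in> rotation_set F"
    using translated_point_rotation_vector lift unfolding torus_homeo_lift_def by blast
  then have "\<alpha> = real_of_int a / real m"
    using rot by (metis singletonD vector_2(1))
  then show False
    using rationally_independent3_irrational[OF indep] by simp
qed

end
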